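(* Let $\mathcal{S}=\{s_1,\dots,s_N\}$ be a finite state space, $\mathcal{A}$ a finite action space, $\gamma\in(0,1)$, and consider the real MDP $\langle\mathcal{S},\mathcal{A},\mathbb{P},R,\gamma\rangle$ and the DT MDP $\langle\mathcal{S},\mathcal{A},\mathbb{P}',R',\gamma\rangle$. Then for all states $s_i,s_j,s_k,s_l\in\mathcal{S}$ and all $n\in\mathbb{N}$, $$d_n(s_i,s_l)\le d_n(s_i,s_j)+d_n(s_k,s_j)+d_n(s_k,s_l).$$
   Context: $\mathbb{P}(\cdot|s,a),\mathbb{P}'(\cdot|s,a)$ are probability distributions on $\mathcal{S}$; $R,R':\mathcal{S}\times\mathcal{A}\to\mathbb{R}$. For distributions $P,Q$ on $\mathcal{S}$ and a cost $d:\mathcal{S}\times\mathcal{S}\to[0,\infty)$ (not required to vanish on the diagonal), $W_1(P,Q;d)=\min_\Lambda\sum_{i,j}\lambda_{i,j}d(s_i,s_j)$ over nonnegative $N\times N$ matrices with row sums $P(s_i)$ and column sums $Q(s_j)$. Define $d_0\equiv0$ and $d_n(s_i,s_j)=\max_a\{|R(s_i,a)-R'(s_j,a)|+\gamma W_1(\mathbb{P}(\cdot|s_i,a),\mathbb{P}'(\cdot|s_j,a);d_{n-1})\}$. In $d_n(x,y)$ the first argument $x$ is a state of the real MDP and the second $y$ a state of the DT MDP, so the inequality concerns real-MDP states $s_i,s_k$ and DT-MDP states $s_j,s_l$. *)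

theory Defs
  imports "HOL-Analysis.Analysis"
begin

definition couplings :: "('s::finite \<Rightarrow> real) \<Rightarrow> ('s \<Rightarrow> real) \<Rightarrow> ('s \<Rightarrow> 's \<Rightarrow> real) set" where
  "couplings p q = {\<Lambda>. (\<forall>x y. 0 \<le> \<Lambda> x y) \<and> (\<forall>x. (\<Sum>y\<in>UNIV. \<Lambda> x y) = p x)
                        \<and> (\<forall>y. (\<Sum>x\<in>UNIV. \<Lambda> x y) = q y)}"

text \<open>Wasserstein-1 distance w.r.t. a cost d (the minimum over couplings; written as Inf,
  which is attained for distributions on a finite set).\<close>
definition W1 :: "('s::finite \<Rightarrow> real) \<Rightarrow> ('s \<Rightarrow> real) \<Rightarrow> ('s \<Rightarrow> 's \<Rightarrow> real) \<Rightarrow> real" where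
  "W1 p q d = Inf ((\<lambda>\<Lambda>. \<Sum>x\<in>UNIV. \<Sum>y\<in>UNIV. \<Lambda> x y * d x y) ` couplings p q)"

text \<open>P, P' are transition kernels (P s a s' = probability of s' from s under a),
  R, R' reward functions, \<gamma> discount. The first argument of d_n is a state of the real MDP,
  the second a state of the DT MDP.\<close>
primrec dn :: "real \<Rightarrow> ('s::finite \<Rightarrow> 'a::finite \<Rightarrow> 's \<Rightarrow> real) \<Rightarrow> ('s \<Rightarrow> 'a \<Rightarrow> 's \<Rightarrow> real)
               \<Rightarrow> ('s \<Rightarrow> 'a \<Rightarrow> real) \<Rightarrow> ('s \<Rightarrow> 'a \<Rightarrow> real) \<Rightarrow> nat \<Rightarrow> 's \<Rightarrow> 's \<Rightarrow> real" where
  "dn \<gamma> P P' R R' 0 = (\<lambda>x y. 0)"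
| "dn \<gamma> P P' R R' (Suc n) = (\<lambda>x y. Max (range (\<lambda>a.
      \<bar>R x a - R' y a\<bar> + \<gamma> * W1 (P x a) (P' y a) (dn \<gamma> P P' R R' n))))"

definition is_distribution :: "('s::finite \<Rightarrow> real) \<Rightarrow> bool" where
  "is_distribution p \<longleftrightarrow> (\<forall>x. 0 \<le> p x) \<and> (\<Sum>x\<in>UNIV. p x) = 1"

end

(* The four-point inequality d_n(x, w) <= d_n(x, y) + d_n(z, y) + d_n(z, w) propagates along
   the recursion for d_n. For the reward term it is the triangle inequality of the absolute
   value. For the transport term it says that W1 inherits the four-point inequality from its
   cost, which follows from the gluing lemma of optimal transport: couplings of (p, r) and
   (r, q) compose along their common marginal r to a coupling of (p, q), whose cost is at most
   the sum of the two costs whenever the costs satisfy d x z <= d1 x y + d2 y z. Gluing twice,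
   through the cost min_y (d x y + d z y) and the transposed cost, gives the claim. *)

theory Submission
  imports Defs
begin

definition coupling_cost :: "('s::finite \<Rightarrow> 's \<Rightarrow> real) \<Rightarrow> ('s \<Rightarrow> 's \<Rightarrow> real) \<Rightarrow> real" where
  "coupling_cost d \<Lambda> = (\<Sum>x\<in>UNIV. \<Sum>y\<in>UNIV. \<Lambda> x y * d x y)"

lemma W1_eq_Inf_coupling_cost: "W1 p q d = Inf (coupling_cost d ` couplings p q)"
  unfolding W1_def coupling_cost_def ..

lemma couplingsD:
  assumes "\<Lambda> \<in> couplings p q"
  shows "0 \<le> \<Lambda> x y" "(\<Sum>y\<in>UNIV. \<Lambda> x y) = p x" "(\<Sum>x\<in>UNIV. \<Lambda> x y) = q y"
  using assms unfolding couplings_def by auto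

lemma couplings_marginals_nonneg:
  assumes "\<Lambda> \<in> couplings p q"
  shows "0 \<le> p x" "0 \<le> q y"
  using couplingsD[OF assms] by (metis sum_nonneg)+

lemma couplings_eq_0_if_marginal_eq_0:
  assumes "\<Lambda> \<in> couplings p q"
  shows "p x = 0 \<Longrightarrow> \<Lambda> x y = 0" and "q y = 0 \<Longrightarrow> \<Lambda> x y = 0"
  using couplingsD[OF assms] by (metis UNIV_I finite sum_nonneg_eq_0_iff)+

lemma product_coupling:
  assumes "is_distribution p" "is_distribution q"
  shows "(\<lambda>x y. p x * q y) \<in> couplings p q"
  using assms unfolding couplings_def is_distribution_def
  by (auto simp: sum_distrib_left[symmetric] sum_distrib_right[symmetric])

lemma transpose_couplings:
  assumes "\<Lambda> \<in> couplings p q"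
  shows "(\<lambda>x y. \<Lambda> y x) \<in> couplings q p"
  using assms unfolding couplings_def by auto

text \<open>For \<open>\<Lambda>\<^sub>1 \<in> couplings p r\<close> and \<open>\<Lambda>\<^sub>2 \<in> couplings r q\<close> this is the joint law of
  (x, y, z) under which x and z are conditionally independent given y. Where \<open>r y = 0\<close>
  the numerator vanishes too, so the junk value of division by zero does no harm.\<close>
definition glue :: "('s::finite \<Rightarrow> real) \<Rightarrow> ('s \<Rightarrow> 's \<Rightarrow> real) \<Rightarrow> ('s \<Rightarrow> 's \<Rightarrow> real)
                      \<Rightarrow> 's \<Rightarrow> 's \<Rightarrow> 's \<Rightarrow> real" where
  "glue r \<Lambda>\<^sub>1 \<Lambda>\<^sub>2 x y z = \<Lambda>\<^sub>1 x y * \<Lambda>\<^sub>2 y z / r y"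

definition coupling_comp :: "('s::finite \<Rightarrow> real) \<Rightarrow> ('s \<Rightarrow> 's \<Rightarrow> real) \<Rightarrow> ('s \<Rightarrow> 's \<Rightarrow> real)
                               \<Rightarrow> 's \<Rightarrow> 's \<Rightarrow> real" where
  "coupling_comp r \<Lambda>\<^sub>1 \<Lambda>\<^sub>2 x z = (\<Sum>y\<in>UNIV. glue r \<Lambda>\<^sub>1 \<Lambda>\<^sub>2 x y z)"

context
  fixes p q r :: "'s::finite \<Rightarrow> real" and \<Lambda>\<^sub>1 \<Lambda>\<^sub>2 :: "'s \<Rightarrow> 's \<Rightarrow> real"
  assumes \<Lambda>\<^sub>1: "\<Lambda>\<^sub>1 \<in> couplings p r" and \<Lambda>\<^sub>2: "\<Lambda>\<^sub>2 \<in> couplings r q"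
begin

lemma glue_nonneg: "0 \<le> glue r \<Lambda>\<^sub>1 \<Lambda>\<^sub>2 x y z"
  unfolding glue_def
  using couplingsD(1)[OF \<Lambda>\<^sub>1] couplingsD(1)[OF \<Lambda>\<^sub>2] couplings_marginals_nonneg(2)[OF \<Lambda>\<^sub>1]
  by simp

lemma sum_glue_last: "(\<Sum>z\<in>UNIV. glue r \<Lambda>\<^sub>1 \<Lambda>\<^sub>2 x y z) = \<Lambda>\<^sub>1 x y"
proof -
  have "(\<Sum>z\<in>UNIV. glue r \<Lambda>\<^sub>1 \<Lambda>\<^sub>2 x y z) = \<Lambda>\<^sub>1 x y * r y / r y"
    unfolding glue_def by (simp add: sum_divide_distrib[symmetric] sum_distrib_left[symmetric]
        couplingsD(2)[OF \<Lambda>\<^sub>2])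
  then show ?thesis
    using couplings_eq_0_if_marginal_eq_0(2)[OF \<Lambda>\<^sub>1] by (cases "r y = 0") auto
qed

lemma sum_glue_first: "(\<Sum>x\<in>UNIV. glue r \<Lambda>\<^sub>1 \<Lambda>\<^sub>2 x y z) = \<Lambda>\<^sub>2 y z"
proof -
  have "(\<Sum>x\<in>UNIV. glue r \<Lambda>\<^sub>1 \<Lambda>\<^sub>2 x y z) = r y * \<Lambda>\<^sub>2 y z / r y"
    unfolding glue_def by (simp add: sum_divide_distrib[symmetric] sum_distrib_right[symmetric]
        couplingsD(3)[OF \<Lambda>\<^sub>1])
  then show ?thesis
    using couplings_eq_0_if_marginal_eq_0(1)[OF \<Lambda>\<^sub>2] by (cases "r y = 0") auto
qed

lemma coupling_comp_in_couplings: "coupling_comp r \<Lambda>\<^sub>1 \<Lambda>\<^sub>2 \<in> couplings p q"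
proof -
  have "(\<Sum>z\<in>UNIV. coupling_comp r \<Lambda>\<^sub>1 \<Lambda>\<^sub>2 x z) = p x" for x
    unfolding coupling_comp_def
    by (subst sum.swap) (simp add: sum_glue_last couplingsD(2)[OF \<Lambda>\<^sub>1])
  moreover have "(\<Sum>x\<in>UNIV. coupling_comp r \<Lambda>\<^sub>1 \<Lambda>\<^sub>2 x z) = q z" for z
    unfolding coupling_comp_def
    by (subst sum.swap) (simp add: sum_glue_first couplingsD(3)[OF \<Lambda>\<^sub>2])
  ultimately show ?thesis
    unfolding couplings_def coupling_comp_def by (auto intro: sum_nonneg glue_nonneg)
qed

lemma coupling_cost_comp_le:
  assumes triangle: "\<And>x y z. d x z \<le> d\<^sub>1 x y + d\<^sub>2 y z"
  shows "coupling_cost d (coupling_comp r \<Lambda>\<^sub>1 \<Lambda>\<^sub>2) \<le> coupling_cost d\<^sub>1 \<Lambda>\<^sub>1 + coupling_cost d\<^sub>2 \<Lambda>\<^sub>2"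
proof -
  let ?g = "glue r \<Lambda>\<^sub>1 \<Lambda>\<^sub>2"
  have cost\<^sub>1: "(\<Sum>x\<in>UNIV. \<Sum>z\<in>UNIV. \<Sum>y\<in>UNIV. ?g x y z * d\<^sub>1 x y) = coupling_cost d\<^sub>1 \<Lambda>\<^sub>1"
  proof -
    have "(\<Sum>x\<in>UNIV. \<Sum>z\<in>UNIV. \<Sum>y\<in>UNIV. ?g x y z * d\<^sub>1 x y)
        = (\<Sum>x\<in>UNIV. \<Sum>y\<in>UNIV. (\<Sum>z\<in>UNIV. ?g x y z) * d\<^sub>1 x y)"
      by (simp only: sum_distrib_right, rule sum.cong[OF refl], rule sum.swap)
    then show ?thesis by (simp only: sum_glue_last coupling_cost_def)
  qed
  have cost\<^sub>2: "(\<Sum>x\<in>UNIV. \<Sum>z\<in>UNIV. \<Sum>y\<in>UNIV. ?g x y z * d\<^sub>2 y z) = coupling_cost d\<^sub>2 \<Lambda>\<^sub>2"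
  proof -
    have "(\<Sum>x\<in>UNIV. \<Sum>z\<in>UNIV. \<Sum>y\<in>UNIV. ?g x y z * d\<^sub>2 y z)
        = (\<Sum>y\<in>UNIV. \<Sum>x\<in>UNIV. \<Sum>z\<in>UNIV. ?g x y z * d\<^sub>2 y z)"
      by (subst sum.swap[where A=UNIV]) (rule sum.cong[OF refl], rule sum.swap)
    also have "\<dots> = (\<Sum>y\<in>UNIV. \<Sum>z\<in>UNIV. (\<Sum>x\<in>UNIV. ?g x y z) * d\<^sub>2 y z)"
      by (simp only: sum_distrib_right, rule sum.cong[OF refl], rule sum.swap)
    finally show ?thesis by (simp only: sum_glue_first coupling_cost_def)
  qed
  have "coupling_cost d (coupling_comp r \<Lambda>\<^sub>1 \<Lambda>\<^sub>2) = (\<Sum>x\<in>UNIV. \<Sum>z\<in>UNIV. \<Sum>y\<in>UNIV. ?g x y z * d x z)"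
    unfolding coupling_cost_def coupling_comp_def by (simp add: sum_distrib_right)
  also have "\<dots> \<le> (\<Sum>x\<in>UNIV. \<Sum>z\<in>UNIV. \<Sum>y\<in>UNIV. ?g x y z * d\<^sub>1 x y + ?g x y z * d\<^sub>2 y z)"
    by (intro sum_mono) (metis distrib_left glue_nonneg mult_left_mono triangle)
  also have "\<dots> = coupling_cost d\<^sub>1 \<Lambda>\<^sub>1 + coupling_cost d\<^sub>2 \<Lambda>\<^sub>2"
    by (simp only: sum.distrib cost\<^sub>1 cost\<^sub>2)
  finally show ?thesis .
qed

end

lemma coupling_cost_nonneg:
  assumes "\<And>x y. 0 \<le> d x y" and "\<Lambda> \<in> couplings p q"
  shows "0 \<le> coupling_cost d \<Lambda>"
  unfolding coupling_cost_def using assms couplingsD(1)[OF assms(2)] by (auto intro!: sum_nonneg)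

lemma W1_le_coupling_cost:
  assumes "\<And>x y. 0 \<le> d x y" and "\<Lambda> \<in> couplings p q"
  shows "W1 p q d \<le> coupling_cost d \<Lambda>"
  unfolding W1_eq_Inf_coupling_cost
proof (rule cInf_lower)
  show "coupling_cost d \<Lambda> \<in> coupling_cost d ` couplings p q"
    using assms(2) by (rule imageI)
  show "bdd_below (coupling_cost d ` couplings p q)"
    using coupling_cost_nonneg[where d=d, OF assms(1)] by (rule bdd_belowI2)
qed

lemma W1_greatest:
  assumes "is_distribution p" and "is_distribution q"
    and "\<And>\<Lambda>. \<Lambda> \<in> couplings p q \<Longrightarrow> c \<le> coupling_cost d \<Lambda>"
  shows "c \<le> W1 p q d"
  unfolding W1_eq_Inf_coupling_cost
  using assms product_coupling[OF assms(1,2)] by (intro cInf_greatest) auto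

lemma W1_nonneg:
  assumes "is_distribution p" and "is_distribution q" and "\<And>x y. 0 \<le> d x y"
  shows "0 \<le> W1 p q d"
  using coupling_cost_nonneg[where d=d, OF assms(3)] by (rule W1_greatest[OF assms(1,2)])

lemma W1_transpose: "W1 q p (\<lambda>x y. d y x) = W1 p q d"
proof -
  have cost_transpose: "coupling_cost (\<lambda>x y. d y x) \<Lambda> = coupling_cost d (\<lambda>x y. \<Lambda> y x)" for \<Lambda>
    unfolding coupling_cost_def by (rule sum.swap)
  have "coupling_cost (\<lambda>x y. d y x) ` couplings q p = coupling_cost d ` couplings p q"
  proof (intro equalityI image_subsetI)
    fix \<Lambda> assume "\<Lambda> \<in> couplings q p"
    then show "coupling_cost (\<lambda>x y. d y x) \<Lambda> \<in> coupling_cost d ` couplings p q"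
      by (rule image_eqI[where f="coupling_cost d", OF cost_transpose transpose_couplings])
  next
    fix \<Lambda> assume "\<Lambda> \<in> couplings p q"
    then show "coupling_cost d \<Lambda> \<in> coupling_cost (\<lambda>x y. d y x) ` couplings q p"
      by (rule image_eqI[where f="coupling_cost (\<lambda>x y. d y x)",
            OF cost_transpose[symmetric, of "\<lambda>x y. \<Lambda> y x"] transpose_couplings])
  qed
  then show ?thesis
    unfolding W1_eq_Inf_coupling_cost by (rule arg_cong)
qed

lemma W1_triangle:
  assumes "is_distribution p" "is_distribution r" "is_distribution q"
    and "\<And>x z. 0 \<le> d x z" and "\<And>x y z. d x z \<le> d\<^sub>1 x y + d\<^sub>2 y z"
  shows "W1 p q d \<le> W1 p r d\<^sub>1 + W1 r q d\<^sub>2"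
proof -
  have "W1 p q d - W1 p r d\<^sub>1 \<le> coupling_cost d\<^sub>2 \<Lambda>\<^sub>2" if \<Lambda>\<^sub>2: "\<Lambda>\<^sub>2 \<in> couplings r q" for \<Lambda>\<^sub>2
  proof -
    have "W1 p q d - coupling_cost d\<^sub>2 \<Lambda>\<^sub>2 \<le> W1 p r d\<^sub>1"
    proof (rule W1_greatest[OF assms(1,2)])
      fix \<Lambda>\<^sub>1 assume \<Lambda>\<^sub>1: "\<Lambda>\<^sub>1 \<in> couplings p r"
      have "W1 p q d \<le> coupling_cost d (coupling_comp r \<Lambda>\<^sub>1 \<Lambda>\<^sub>2)"
        by (rule W1_le_coupling_cost[where d=d, OF assms(4) coupling_comp_in_couplings[OF \<Lambda>\<^sub>1 \<Lambda>\<^sub>2]])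
      also have "\<dots> \<le> coupling_cost d\<^sub>1 \<Lambda>\<^sub>1 + coupling_cost d\<^sub>2 \<Lambda>\<^sub>2"
        by (rule coupling_cost_comp_le[OF \<Lambda>\<^sub>1 \<Lambda>\<^sub>2 assms(5)])
      finally show "W1 p q d - coupling_cost d\<^sub>2 \<Lambda>\<^sub>2 \<le> coupling_cost d\<^sub>1 \<Lambda>\<^sub>1" by linarith
    qed
    then show ?thesis by linarith
  qed
  then have "W1 p q d - W1 p r d\<^sub>1 \<le> W1 r q d\<^sub>2"
    by (rule W1_greatest[OF assms(2,3)])
  then show ?thesis by linarith
qed

lemma W1_four_point:
  assumes "is_distribution p" "is_distribution q" "is_distribution p'" "is_distribution q'"
    and nonneg: "\<And>x y. 0 \<le> d x y"
    and four_point: "\<And>x y z w. d x w \<le> d x y + d z y + d z w"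
  shows "W1 p q' d \<le> W1 p q d + W1 p' q d + W1 p' q' d"
proof -
  \<comment> \<open>splits the four-point inequality into two triangle inequalities\<close>
  define e where "e x z = Min (range (\<lambda>y. d x y + d z y))" for x z
  have e_le: "e x z \<le> d x y + d z y" for x y z
    unfolding e_def by (rule Min_le) auto
  have e_attained: "\<exists>y. e x z = d x y + d z y" for x z
  proof -
    have "e x z \<in> range (\<lambda>y. d x y + d z y)"
      unfolding e_def by (rule Min_in) auto
    then show ?thesis by auto
  qed
  have e_nonneg: "0 \<le> e x z" for x z
  proof -
    obtain y where "e x z = d x y + d z y" using e_attained by blast
    then show ?thesis using nonneg[of x y] nonneg[of z y] by simp
  qed
  have "W1 p q' d \<le> W1 p p' e + W1 p' q' d"
    by (rule W1_triangle[OF assms(1,3,4) nonneg]) (metis e_attained four_point)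
  moreover have "W1 p p' e \<le> W1 p q d + W1 q p' (\<lambda>x y. d y x)"
    by (rule W1_triangle[OF assms(1,2,3) e_nonneg e_le])
  ultimately show ?thesis
    using W1_transpose[of q p' d] by linarith
qed

lemma Max_range_le_add3:
  fixes f g h k :: "'a::finite \<Rightarrow> 'b::linordered_ab_semigroup_add"
  assumes "\<And>a. f a \<le> g a + h a + k a"
  shows "Max (range f) \<le> Max (range g) + Max (range h) + Max (range k)"
proof (rule Max.boundedI)
  fix t assume "t \<in> range f"
  then obtain a where "t = f a" by blast
  also have "f a \<le> g a + h a + k a" by (rule assms)
  also have "\<dots> \<le> Max (range g) + Max (range h) + Max (range k)"
    by (intro add_mono Max_ge) auto
  finally show "t \<le> Max (range g) + Max (range h) + Max (range k)" .
qed auto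

context
  fixes \<gamma> :: real and P P' :: "'s::finite \<Rightarrow> 'a::finite \<Rightarrow> 's \<Rightarrow> real"
    and R R' :: "'s \<Rightarrow> 'a \<Rightarrow> real"
  assumes \<gamma>: "0 \<le> \<gamma>"
    and P: "\<And>s a. is_distribution (P s a)" and P': "\<And>s a. is_distribution (P' s a)"
begin

lemma dn_nonneg: "0 \<le> dn \<gamma> P P' R R' n x y"
proof (induction n arbitrary: x y)
  case 0
  show ?case by simp
next
  case (Suc n)
  let ?f = "\<lambda>a. \<bar>R x a - R' y a\<bar> + \<gamma> * W1 (P x a) (P' y a) (dn \<gamma> P P' R R' n)"
  have "0 \<le> ?f a" for a
    using \<gamma> W1_nonneg[OF P P' Suc.IH] by simp
  also have "?f a \<le> Max (range ?f)" for a
    by (rule Max_ge) auto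
  finally show ?case by simp
qed

lemma dn_four_point:
  "dn \<gamma> P P' R R' n x w
     \<le> dn \<gamma> P P' R R' n x y + dn \<gamma> P P' R R' n z y + dn \<gamma> P P' R R' n z w"
proof (induction n arbitrary: x y z w)
  case 0
  show ?case by simp
next
  case (Suc n)
  let ?f = "\<lambda>x y a. \<bar>R x a - R' y a\<bar> + \<gamma> * W1 (P x a) (P' y a) (dn \<gamma> P P' R R' n)"
  have "?f x w a \<le> ?f x y a + ?f z y a + ?f z w a" for a
  proof -
    have transport: "W1 (P x a) (P' w a) (dn \<gamma> P P' R R' n)
        \<le> W1 (P x a) (P' y a) (dn \<gamma> P P' R R' n) + W1 (P z a) (P' y a) (dn \<gamma> P P' R R' n)
           + W1 (P z a) (P' w a) (dn \<gamma> P P' R R' n)"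
      by (rule W1_four_point[OF P P' P P' dn_nonneg Suc.IH])
    have "\<gamma> * W1 (P x a) (P' w a) (dn \<gamma> P P' R R' n)
        \<le> \<gamma> * W1 (P x a) (P' y a) (dn \<gamma> P P' R R' n) + \<gamma> * W1 (P z a) (P' y a) (dn \<gamma> P P' R R' n)
           + \<gamma> * W1 (P z a) (P' w a) (dn \<gamma> P P' R R' n)"
      using mult_left_mono[OF transport \<gamma>] by (simp only: distrib_left)
    moreover have "\<bar>R x a - R' w a\<bar> \<le> \<bar>R x a - R' y a\<bar> + \<bar>R z a - R' y a\<bar> + \<bar>R z a - R' w a\<bar>"
      by linarith
    ultimately show ?thesis by linarith
  qed
  then show ?case
    by (simp only: dn.simps) (rule Max_range_le_add3)
qed

end

theorem corollary2:
  fixes P P' :: "'s::finite \<Rightarrow> 'a::finite \<Rightarrow> 's \<Rightarrow> real"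
    and R R' :: "'s \<Rightarrow> 'a \<Rightarrow> real"
    and \<gamma> :: real
  assumes "0 < \<gamma>" and "\<gamma> < 1"
    and "\<And>s a. is_distribution (P s a)"
    and "\<And>s a. is_distribution (P' s a)"
  shows "\<forall>si sj sk sl n.
           dn \<gamma> P P' R R' n si sl
             \<le> dn \<gamma> P P' R R' n si sj + dn \<gamma> P P' R R' n sk sj + dn \<gamma> P P' R R' n sk sl"
  \<comment> \<open>\<open>\<gamma> < 1\<close> is needed only for the convergence of \<open>d\<^sub>n\<close>, not here\<close>
  using dn_four_point[where P=P and P'=P', OF less_imp_le[OF assms(1)] assms(3,4)] by blast

end
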